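(* For every $n\ge1$ and all polynomials $f_1,g_1,f_2,g_2$ of degree at most $n$, there exist real polynomials $\alpha,\beta,\gamma,\delta$ in $h$ with $\deg\alpha,\deg\gamma\le[\frac n2]$, $\deg\beta,\deg\delta\le[\frac{n-1}{2}]$, and a real polynomial $\varphi$ of degree at most $n-1$, such that for all $h\in(0,+\infty)$, $$M(h)=\alpha(h)U_{0,0}(h)+\beta(h)U_{0,1}(h)+\gamma(h)V_{0,0}(h)+\delta(h)V_{0,1}(h)+\Big(\tfrac{\sqrt{1+4h}-1}{2}\Big)^{3/2}\varphi\Big(\tfrac{\sqrt{1+4h}-1}{2}\Big).$$
   Context: Consider the system with the single switching curve $y=x^2$: $\dot x=y+\varepsilon f_1(x,y)$, $\dot y=-x+\varepsilon g_1(x,y)$ for $y<x^2$, and $\dot x=y+\varepsilon f_2(x,y)$, $\dot y=-x+\varepsilon g_2(x,y)$ for $y>x^2$, where $f_1,g_1,f_2,g_2$ are real polynomials of degree at most $n$. For $h>0$ let $u=\sqrt{(\sqrt{1+4h}-1)/2}$, $\Gamma_h$ the circle $x^2+y^2=h$, $A=(u,u^2)$, $D=(-u,u^2)$. Let $\widehat{AD}$ be the arc of $\Gamma_h$ traversed clockwise from $A$ to $D$ through $(\sqrt h,0),(0,-\sqrt h),(-\sqrt h,0)$, and $\widehat{DA}$ the arc traversed clockwise from $D$ to $A$ through $(0,\sqrt h)$. The first order Melnikov function is $M(h)=\int_{\widehat{AD}}g_1dx-f_1dy+\int_{\widehat{DA}}g_2dx-f_2dy$, and for integers $i,j\ge0$,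 $U_{i,j}(h)=\int_{\widehat{AD}}x^iy^jdx$, $V_{i,j}(h)=\int_{\widehat{DA}}x^iy^jdx$. $[p]$ is the integer part of $p$. *)

theory Defs
  imports "HOL-Analysis.Analysis" "HOL-Computational_Algebra.Polynomial"
begin

definition poly2_deg_le :: "nat \<Rightarrow> (real \<Rightarrow> real \<Rightarrow> real) \<Rightarrow> bool" where
  "poly2_deg_le n F \<longleftrightarrow>
     (\<exists>c :: nat \<Rightarrow> nat \<Rightarrow> real. \<forall>x y. F x y = (\<Sum>i\<le>n. \<Sum>j\<le>n - i. c i j * x ^ i * y ^ j))"

definition vv :: "real \<Rightarrow> real" where
  "vv h = (sqrt (1 + 4 * h) - 1) / 2"

definition uu :: "real \<Rightarrow> real" where
  "uu h = sqrt (vv h)"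

definition arc_int :: "(real \<Rightarrow> real \<Rightarrow> real) \<Rightarrow> (real \<Rightarrow> real \<Rightarrow> real) \<Rightarrow> real \<Rightarrow> real \<Rightarrow> real \<Rightarrow> real" where
  "arc_int P Q h th0 th1 = integral {0..1} (\<lambda>t.
     let th = th0 + t * (th1 - th0); x = sqrt h * cos th; y = sqrt h * sin th in
     (P x y * (- sqrt h * sin th) + Q x y * (sqrt h * cos th)) * (th1 - th0))"

text \<open>A = (u,u^2) has polar angle arctan u; D = (-u,u^2) has angle pi - arctan u.
  Arc AD (clockwise through (sqrt h,0),(0,-sqrt h),(-sqrt h,0)): angle from arctan u down to -pi - arctan u.
  Arc DA (clockwise through (0,sqrt h)): angle from pi - arctan u down to arctan u.\<close>
definition arcAD :: "(real \<Rightarrow> real \<Rightarrow> real) \<Rightarrow> (real \<Rightarrow> real \<Rightarrow> real) \<Rightarrow> real \<Rightarrow> real" where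
  "arcAD P Q h = arc_int P Q h (arctan (uu h)) (- pi - arctan (uu h))"

definition arcDA :: "(real \<Rightarrow> real \<Rightarrow> real) \<Rightarrow> (real \<Rightarrow> real \<Rightarrow> real) \<Rightarrow> real \<Rightarrow> real" where
  "arcDA P Q h = arc_int P Q h (pi - arctan (uu h)) (arctan (uu h))"

definition melnikov :: "(real \<Rightarrow> real \<Rightarrow> real) \<Rightarrow> (real \<Rightarrow> real \<Rightarrow> real) \<Rightarrow>
    (real \<Rightarrow> real \<Rightarrow> real) \<Rightarrow> (real \<Rightarrow> real \<Rightarrow> real) \<Rightarrow> real \<Rightarrow> real" where
  "melnikov f1 g1 f2 g2 h =
     arcAD g1 (\<lambda>x y. - f1 x y) h + arcDA g2 (\<lambda>x y. - f2 x y) h"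

definition U :: "nat \<Rightarrow> nat \<Rightarrow> real \<Rightarrow> real" where
  "U i j h = arcAD (\<lambda>x y. x ^ i * y ^ j) (\<lambda>x y. 0) h"

definition V :: "nat \<Rightarrow> nat \<Rightarrow> real \<Rightarrow> real" where
  "V i j h = arcDA (\<lambda>x y. x ^ i * y ^ j) (\<lambda>x y. 0) h"

end

theory Submission
  imports Defs
begin

text \<open>Along any arc of the circle \<open>x\<^sup>2 + y\<^sup>2 = h\<close>, the moments \<open>\<integral> x\<^sup>i y\<^sup>j dx\<close> and
  \<open>\<integral> x\<^sup>i y\<^sup>j dy\<close> reduce to \<open>\<integral> dx\<close> and \<open>\<integral> y dx\<close> plus increments of monomials between the
  endpoints, using \<open>x\<^sup>2 = h - y\<^sup>2\<close>, \<open>y dy = - x dx\<close> and the exactness of \<open>d(x\<^sup>p y\<^sup>q)\<close>.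
  Both arcs run between \<open>(\<plusminus>u, u\<^sup>2)\<close>, so the increment of \<open>x\<^sup>p y\<^sup>q\<close> vanishes for even \<open>p\<close>
  and is an odd power of \<open>u\<close> otherwise; with \<open>v = u\<^sup>2\<close> these are \<open>u = - U 0 0 / 2\<close> and
  \<open>u ^ (2k + 3) = v powr (3/2) * v ^ k\<close>. Multiplying by \<open>h = v + v\<^sup>2\<close> raises the degrees
  by exactly the amount the bounds allow, so an induction on \<open>i + j\<close> shows that the moments
  satisfy the degree bounds of the theorem with \<open>n = i + j\<close>.\<close>

definition arc_x :: "real \<Rightarrow> real \<Rightarrow> real \<Rightarrow> real \<Rightarrow> real" where
  "arc_x h a b t = sqrt h * cos (a + t * (b - a))"

definition arc_y :: "real \<Rightarrow> real \<Rightarrow> real \<Rightarrow> real \<Rightarrow> real" where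
  "arc_y h a b t = sqrt h * sin (a + t * (b - a))"

definition int_xy_dx :: "nat \<Rightarrow> nat \<Rightarrow> real \<Rightarrow> real \<Rightarrow> real \<Rightarrow> real" where
  "int_xy_dx i j h a b =
     integral {0..1} (\<lambda>t. arc_x h a b t ^ i * arc_y h a b t ^ j * (- arc_y h a b t * (b - a)))"

definition int_xy_dy :: "nat \<Rightarrow> nat \<Rightarrow> real \<Rightarrow> real \<Rightarrow> real \<Rightarrow> real" where
  "int_xy_dy i j h a b =
     integral {0..1} (\<lambda>t. arc_x h a b t ^ i * arc_y h a b t ^ j * (arc_x h a b t * (b - a)))"

lemma continuous_on_arc [continuous_intros]:
  "continuous_on S (arc_x h a b)" "continuous_on S (arc_y h a b)"
  unfolding arc_x_def arc_y_def by (intro continuous_intros)+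

lemma arc_on_circle: "h \<ge> 0 \<Longrightarrow> arc_x h a b t ^ 2 + arc_y h a b t ^ 2 = h"
  unfolding arc_x_def arc_y_def by (simp add: power_mult_distrib flip: distrib_left)

lemma arc_x_deriv: "(arc_x h a b has_real_derivative - arc_y h a b t * (b - a)) (at t)"
  unfolding arc_x_def arc_y_def by (auto intro!: derivative_eq_intros)

lemma arc_y_deriv: "(arc_y h a b has_real_derivative arc_x h a b t * (b - a)) (at t)"
  unfolding arc_x_def arc_y_def by (auto intro!: derivative_eq_intros)

lemma arc_int_eq_integral:
  "arc_int P Q h a b = integral {0..1} (\<lambda>t.
     P (arc_x h a b t) (arc_y h a b t) * (- arc_y h a b t * (b - a))
   + Q (arc_x h a b t) (arc_y h a b t) * (arc_x h a b t * (b - a)))"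
  unfolding arc_int_def arc_x_def arc_y_def Let_def
  by (rule integral_cong) (simp add: algebra_simps)

lemma arc_int_polynomial:
  assumes "\<And>x y. P x y = (\<Sum>i\<le>n. \<Sum>j\<le>n - i. p i j * x ^ i * y ^ j)"
    and "\<And>x y. Q x y = (\<Sum>i\<le>n. \<Sum>j\<le>n - i. q i j * x ^ i * y ^ j)"
  shows "arc_int P Q h a b
       = (\<Sum>i\<le>n. \<Sum>j\<le>n - i. p i j * int_xy_dx i j h a b + q i j * int_xy_dy i j h a b)"
proof -
  have "P x y * (- y * c) + Q x y * (x * c) = (\<Sum>i\<le>n. \<Sum>j\<le>n - i.
          p i j * (x ^ i * y ^ j * (- y * c)) + q i j * (x ^ i * y ^ j * (x * c)))" for x y c :: real
    by (simp add: assms sum_distrib_right sum.distrib sum_subtractf mult.assoc)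
  then show ?thesis
    unfolding arc_int_eq_integral int_xy_dx_def int_xy_dy_def
    by (simp add: integral_sum integral_diff integrable_continuous_interval continuous_intros)
qed

lemma integral_arc_exact:
  fixes p q :: nat and h a b :: real
  defines "X \<equiv> arc_x h a b" and "Y \<equiv> arc_y h a b"
  shows "integral {0..1} (\<lambda>t. (real p * X t ^ (p - 1) * Y t ^ q * (- Y t * (b - a))
                              + real q * X t ^ p * Y t ^ (q - 1) * (X t * (b - a))))
       = X 1 ^ p * Y 1 ^ q - X 0 ^ p * Y 0 ^ q"
proof -
  have "((\<lambda>t. X t ^ p * Y t ^ q) has_real_derivative
          real p * X t ^ (p - 1) * Y t ^ q * (- Y t * (b - a))
        + real q * X t ^ p * Y t ^ (q - 1) * (X t * (b - a))) (at t)" for t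
    unfolding X_def Y_def
    by (rule derivative_eq_intros arc_x_deriv arc_y_deriv refl)+ (simp add: algebra_simps)
  then have "((\<lambda>t. real p * X t ^ (p - 1) * Y t ^ q * (- Y t * (b - a))
                 + real q * X t ^ p * Y t ^ (q - 1) * (X t * (b - a)))
        has_integral (X 1 ^ p * Y 1 ^ q - X 0 ^ p * Y 0 ^ q)) {0..1}"
    by (intro fundamental_theorem_of_calculus)
       (auto simp: has_real_derivative_iff_has_vector_derivative intro: has_vector_derivative_at_within)
  then show ?thesis by (rule integral_unique)
qed

lemma int_xy_dy_Suc: "int_xy_dy i (Suc j) h a b = - int_xy_dx (Suc i) j h a b"
  unfolding int_xy_dx_def int_xy_dy_def
  by (simp add: algebra_simps flip: integral_neg)

lemma int_xy_dx_0_0: "int_xy_dx 0 0 h a b = arc_x h a b 1 - arc_x h a b 0"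
  using integral_arc_exact[where p=1 and q=0 and h=h and a=a and b=b] by (simp add: int_xy_dx_def)

lemma int_xy_dx_1:
  "real (j + 2) * int_xy_dx 1 j h a b = - (arc_y h a b 1 ^ (j + 2) - arc_y h a b 0 ^ (j + 2))"
proof -
  let ?X = "arc_x h a b" and ?Y = "arc_y h a b"
  have "?Y 1 ^ (j + 2) - ?Y 0 ^ (j + 2)
      = integral {0..1} (\<lambda>t. real (j + 2) * (?X t ^ 0 * ?Y t ^ (j + 1) * (?X t * (b - a))))"
    using integral_arc_exact[where p=0 and q="j + 2" and h=h and a=a and b=b] by (simp add: mult.assoc)
  also have "\<dots> = real (j + 2) * int_xy_dy 0 (j + 1) h a b"
    unfolding int_xy_dy_def by (rule integral_mult_right)
  finally show ?thesis
    using int_xy_dy_Suc[of 0 j h a b] by (simp add: algebra_simps)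
qed

lemma int_xy_dx_circle_reduce:
  assumes "h \<ge> 0"
  shows "int_xy_dx (i + 2) j h a b = h * int_xy_dx i j h a b - int_xy_dx i (j + 2) h a b"
proof -
  let ?X = "arc_x h a b" and ?Y = "arc_y h a b"
  have "int_xy_dx (i + 2) j h a b = integral {0..1} (\<lambda>t.
           h * (?X t ^ i * ?Y t ^ j * (- ?Y t * (b - a)))
         - ?X t ^ i * ?Y t ^ (j + 2) * (- ?Y t * (b - a)))"
    unfolding int_xy_dx_def
  proof (rule integral_cong)
    fix t
    have "?X t ^ (i + 2) * ?Y t ^ j * (- ?Y t * (b - a)) =
           (?X t ^ 2 + ?Y t ^ 2) * (?X t ^ i * ?Y t ^ j * (- ?Y t * (b - a)))
         - ?X t ^ i * ?Y t ^ (j + 2) * (- ?Y t * (b - a))"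
      by (simp add: power_add power2_eq_square algebra_simps)
    then show "?X t ^ (i + 2) * ?Y t ^ j * (- ?Y t * (b - a)) =
           h * (?X t ^ i * ?Y t ^ j * (- ?Y t * (b - a)))
         - ?X t ^ i * ?Y t ^ (j + 2) * (- ?Y t * (b - a))"
      by (simp only: arc_on_circle[OF assms])
  qed
  also have "\<dots> = h * int_xy_dx i j h a b - int_xy_dx i (j + 2) h a b"
    unfolding int_xy_dx_def
    by (subst integral_diff) (auto intro!: integrable_continuous_interval continuous_intros)
  finally show ?thesis .
qed

lemma int_xy_dx_0_recurrence:
  assumes "h \<ge> 0"
  shows "real (j + 3) * int_xy_dx 0 (j + 2) h a b - real (j + 2) * h * int_xy_dx 0 j h a b
       = arc_x h a b 1 * arc_y h a b 1 ^ (j + 2) - arc_x h a b 0 * arc_y h a b 0 ^ (j + 2)"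
proof -
  let ?X = "arc_x h a b" and ?Y = "arc_y h a b"
  have "?X 1 * ?Y 1 ^ (j + 2) - ?X 0 * ?Y 0 ^ (j + 2) = integral {0..1} (\<lambda>t.
          ?Y t ^ (j + 2) * (- ?Y t * (b - a)) + real (j + 2) * ?X t * ?Y t ^ (j + 1) * (?X t * (b - a)))"
    using integral_arc_exact[where p=1 and q="j + 2" and h=h and a=a and b=b] by simp
  also have "\<dots> = integral {0..1} (\<lambda>t.
          real (j + 3) * (?X t ^ 0 * ?Y t ^ (j + 2) * (- ?Y t * (b - a)))
        - real (j + 2) * h * (?X t ^ 0 * ?Y t ^ j * (- ?Y t * (b - a))))"
  proof (rule integral_cong)
    fix t
    have "?Y t ^ (j + 2) * (- ?Y t * (b - a)) + real (j + 2) * ?X t * ?Y t ^ (j + 1) * (?X t * (b - a))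
        = real (j + 3) * (?X t ^ 0 * ?Y t ^ (j + 2) * (- ?Y t * (b - a)))
        - real (j + 2) * (?X t ^ 2 + ?Y t ^ 2) * (?X t ^ 0 * ?Y t ^ j * (- ?Y t * (b - a)))"
      by (simp add: power_add power2_eq_square algebra_simps)
    then show "?Y t ^ (j + 2) * (- ?Y t * (b - a)) + real (j + 2) * ?X t * ?Y t ^ (j + 1) * (?X t * (b - a))
        = real (j + 3) * (?X t ^ 0 * ?Y t ^ (j + 2) * (- ?Y t * (b - a)))
        - real (j + 2) * h * (?X t ^ 0 * ?Y t ^ j * (- ?Y t * (b - a)))"
      by (simp only: arc_on_circle[OF assms])
  qed
  also have "\<dots> = real (j + 3) * int_xy_dx 0 (j + 2) h a b - real (j + 2) * h * int_xy_dx 0 j h a b"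
    unfolding int_xy_dx_def
    by (subst integral_diff) (auto intro!: integrable_continuous_interval continuous_intros)
  finally show ?thesis ..
qed

lemma int_xy_dy_0:
  "int_xy_dy i 0 h a b + real i * int_xy_dx (i - 1) 1 h a b
     = arc_x h a b 1 ^ i * arc_y h a b 1 - arc_x h a b 0 ^ i * arc_y h a b 0"
proof -
  let ?X = "arc_x h a b" and ?Y = "arc_y h a b"
  have "?X 1 ^ i * ?Y 1 - ?X 0 ^ i * ?Y 0 = integral {0..1} (\<lambda>t.
          ?X t ^ i * ?Y t ^ 0 * (?X t * (b - a))
        + real i * (?X t ^ (i - 1) * ?Y t ^ 1 * (- ?Y t * (b - a))))"
    using integral_arc_exact[where p=i and q=1 and h=h and a=a and b=b] by (simp add: algebra_simps)
  also have "\<dots> = int_xy_dy i 0 h a b + real i * int_xy_dx (i - 1) 1 h a b"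
    unfolding int_xy_dx_def int_xy_dy_def
    by (subst integral_add) (auto intro!: integrable_continuous_interval continuous_intros)
  finally show ?thesis ..
qed

lemma vv_pos: "h > 0 \<Longrightarrow> vv h > 0"
  unfolding vv_def by (simp add: real_less_rsqrt)

lemma vv_plus_square: "h > 0 \<Longrightarrow> vv h + vv h ^ 2 = h"
  unfolding vv_def by (simp add: power2_eq_square field_simps)

lemma uu_pos: "h > 0 \<Longrightarrow> uu h > 0"
  unfolding uu_def using vv_pos by simp

lemma uu_square: "h > 0 \<Longrightarrow> uu h ^ 2 = vv h"
  unfolding uu_def using vv_pos[of h] by simp

lemma vv_powr_three_halves: "h > 0 \<Longrightarrow> vv h powr (3/2) = uu h ^ 3"
proof -
  assume h: "h > 0"
  have "vv h powr (3/2) = vv h powr (1 + 1/2)"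
    by simp
  also have "\<dots> = vv h powr 1 * vv h powr (1/2)"
    by (rule powr_add)
  also have "\<dots> = vv h * sqrt (vv h)"
    using vv_pos[OF h] by (simp add: powr_half_sqrt)
  also have "\<dots> = uu h ^ 2 * uu h"
    using uu_square[OF h] by (simp add: uu_def)
  finally show ?thesis
    by (simp add: power3_eq_cube power2_eq_square)
qed

lemma sqrt_via_uu: "h > 0 \<Longrightarrow> sqrt h = uu h * sqrt (1 + uu h ^ 2)"
proof -
  assume h: "h > 0"
  have "h = vv h * (1 + vv h)"
    using vv_plus_square[OF h] by (simp add: algebra_simps power2_eq_square)
  then have "h = uu h ^ 2 * (1 + uu h ^ 2)"
    by (simp add: uu_square[OF h])
  then show ?thesis
    using uu_pos[OF h] by (metis abs_of_pos real_sqrt_abs real_sqrt_mult)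
qed

lemma arcAD_endpoints:
  assumes "h > 0"
  defines "th0 \<equiv> arctan (uu h)" and "th1 \<equiv> - pi - arctan (uu h)"
  shows "arc_x h th0 th1 0 = uu h" "arc_x h th0 th1 1 = - uu h"
    and "arc_y h th0 th1 0 = uu h ^ 2" "arc_y h th0 th1 1 = uu h ^ 2"
  using sqrt_via_uu[OF assms(1)] uu_pos[OF assms(1)] add_pos_nonneg[of 1 "uu h * uu h"]
  by (simp_all add: th0_def th1_def arc_x_def arc_y_def cos_arctan sin_arctan power2_eq_square)

lemma arcDA_endpoints:
  assumes "h > 0"
  defines "th0 \<equiv> pi - arctan (uu h)" and "th1 \<equiv> arctan (uu h)"
  shows "arc_x h th0 th1 0 = - uu h" "arc_x h th0 th1 1 = uu h"
    and "arc_y h th0 th1 0 = uu h ^ 2" "arc_y h th0 th1 1 = uu h ^ 2"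
  using sqrt_via_uu[OF assms(1)] uu_pos[OF assms(1)] add_pos_nonneg[of 1 "uu h * uu h"]
  by (simp_all add: th0_def th1_def arc_x_def arc_y_def cos_arctan sin_arctan power2_eq_square)

lemma U_eq_int_xy_dx: "U i j h = int_xy_dx i j h (arctan (uu h)) (- pi - arctan (uu h))"
  by (simp add: U_def arcAD_def arc_int_eq_integral int_xy_dx_def)

lemma V_eq_int_xy_dx: "V i j h = int_xy_dx i j h (pi - arctan (uu h)) (arctan (uu h))"
  by (simp add: V_def arcDA_def arc_int_eq_integral int_xy_dx_def)

lemma U_0_0: "h > 0 \<Longrightarrow> U 0 0 h = - 2 * uu h"
  by (simp add: U_eq_int_xy_dx int_xy_dx_0_0 arcAD_endpoints)

definition UV_combination ::
    "real poly \<Rightarrow> real poly \<Rightarrow> real poly \<Rightarrow> real poly \<Rightarrow> real poly \<Rightarrow> real \<Rightarrow> real" where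
  "UV_combination \<alpha> \<beta> \<gamma> \<delta> \<phi> h =
     poly \<alpha> h * U 0 0 h + poly \<beta> h * U 0 1 h + poly \<gamma> h * V 0 0 h + poly \<delta> h * V 0 1 h
   + vv h powr (3/2) * poly \<phi> (vv h)"

definition representable :: "nat \<Rightarrow> (real \<Rightarrow> real) \<Rightarrow> bool" where
  "representable m F \<longleftrightarrow> (\<exists>\<alpha> \<beta> \<gamma> \<delta> \<phi>.
     degree \<alpha> \<le> m div 2 \<and> degree \<beta> \<le> (m - 1) div 2 \<and>
     degree \<gamma> \<le> m div 2 \<and> degree \<delta> \<le> (m - 1) div 2 \<and> degree \<phi> \<le> m - 1 \<and>
     (\<forall>h>0. F h = UV_combination \<alpha> \<beta> \<gamma> \<delta> \<phi> h))"

lemma representableI: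
  assumes "degree \<alpha> \<le> m div 2" "degree \<beta> \<le> (m - 1) div 2"
    and "degree \<gamma> \<le> m div 2" "degree \<delta> \<le> (m - 1) div 2" "degree \<phi> \<le> m - 1"
    and "\<And>h. h > 0 \<Longrightarrow> F h = UV_combination \<alpha> \<beta> \<gamma> \<delta> \<phi> h"
  shows "representable m F"
  using assms unfolding representable_def by blast

lemma representableE:
  assumes "representable m F"
  obtains \<alpha> \<beta> \<gamma> \<delta> \<phi> where "degree \<alpha> \<le> m div 2" "degree \<beta> \<le> (m - 1) div 2"
    and "degree \<gamma> \<le> m div 2" "degree \<delta> \<le> (m - 1) div 2" "degree \<phi> \<le> m - 1"
    and "\<And>h. h > 0 \<Longrightarrow> F h = UV_combination \<alpha> \<beta> \<gamma> \<delta> \<phi> h"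
  using assms unfolding representable_def by blast

lemma representable_cong: "representable m F \<Longrightarrow> (\<And>h. h > 0 \<Longrightarrow> G h = F h) \<Longrightarrow> representable m G"
  unfolding representable_def by metis

lemma representable_zero: "representable m (\<lambda>h. 0)"
  by (rule representableI[where \<alpha>=0 and \<beta>=0 and \<gamma>=0 and \<delta>=0 and \<phi>=0])
     (simp_all add: UV_combination_def)

lemma representable_U_0_1: "representable 1 (U 0 1)"
  by (rule representableI[where \<alpha>=0 and \<beta>="[:1:]" and \<gamma>=0 and \<delta>=0 and \<phi>=0])
     (simp_all add: UV_combination_def)

lemma representable_V_0_1: "representable 1 (V 0 1)"
  by (rule representableI[where \<alpha>=0 and \<beta>=0 and \<gamma>=0 and \<delta>="[:1:]" and \<phi>=0])
     (simp_all add: UV_combination_def)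

lemma representable_add:
  assumes "representable m F" "representable m G"
  shows "representable m (\<lambda>h. F h + G h)"
proof -
  obtain \<alpha> \<beta> \<gamma> \<delta> \<phi> where F: "degree \<alpha> \<le> m div 2" "degree \<beta> \<le> (m - 1) div 2"
      "degree \<gamma> \<le> m div 2" "degree \<delta> \<le> (m - 1) div 2" "degree \<phi> \<le> m - 1"
      "\<And>h. h > 0 \<Longrightarrow> F h = UV_combination \<alpha> \<beta> \<gamma> \<delta> \<phi> h"
    using assms(1) by (rule representableE) blast
  obtain \<alpha>' \<beta>' \<gamma>' \<delta>' \<phi>' where G: "degree \<alpha>' \<le> m div 2" "degree \<beta>' \<le> (m - 1) div 2"
      "degree \<gamma>' \<le> m div 2" "degree \<delta>' \<le> (m - 1) div 2" "degree \<phi>' \<le> m - 1"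
      "\<And>h. h > 0 \<Longrightarrow> G h = UV_combination \<alpha>' \<beta>' \<gamma>' \<delta>' \<phi>' h"
    using assms(2) by (rule representableE) blast
  show ?thesis
    by (rule representableI[where \<alpha>="\<alpha> + \<alpha>'" and \<beta>="\<beta> + \<beta>'" and \<gamma>="\<gamma> + \<gamma>'"
                                and \<delta>="\<delta> + \<delta>'" and \<phi>="\<phi> + \<phi>'"])
       (use F G in \<open>auto intro: degree_add_le simp: UV_combination_def algebra_simps\<close>)
qed

lemma representable_scale:
  assumes "representable m F"
  shows "representable m (\<lambda>h. c * F h)"
proof -
  obtain \<alpha> \<beta> \<gamma> \<delta> \<phi> where F: "degree \<alpha> \<le> m div 2" "degree \<beta> \<le> (m - 1) div 2"
      "degree \<gamma> \<le> m div 2" "degree \<delta> \<le> (m - 1) div 2" "degree \<phi> \<le> m - 1"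
      "\<And>h. h > 0 \<Longrightarrow> F h = UV_combination \<alpha> \<beta> \<gamma> \<delta> \<phi> h"
    using assms by (rule representableE) blast
  show ?thesis
    by (rule representableI[where \<alpha>="smult c \<alpha>" and \<beta>="smult c \<beta>" and \<gamma>="smult c \<gamma>"
                                and \<delta>="smult c \<delta>" and \<phi>="smult c \<phi>"])
       (use F in \<open>auto intro: order_trans[OF degree_smult_le] simp: UV_combination_def algebra_simps\<close>)
qed

lemma representable_sum:
  "finite S \<Longrightarrow> (\<And>i. i \<in> S \<Longrightarrow> representable m (F i)) \<Longrightarrow> representable m (\<lambda>h. \<Sum>i\<in>S. F i h)"
  by (induction S rule: finite_induct) (simp_all add: representable_zero representable_add)

lemma representable_mono: "representable m F \<Longrightarrow> m \<le> m' \<Longrightarrow> representable m' F"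
  unfolding representable_def
  by (meson diff_le_mono div_le_mono order_trans)

text \<open>The hypothesis \<open>1 \<le> m\<close> is needed because \<open>(0 - 1) div 2 = 0\<close> allows constant
  \<open>\<beta>\<close>, \<open>\<delta>\<close> at level 0, and \<open>h\<close> times a constant no longer fits level 2.\<close>
lemma representable_times_h:
  assumes "representable m F" "1 \<le> m"
  shows "representable (m + 2) (\<lambda>h. h * F h)"
proof -
  obtain \<alpha> \<beta> \<gamma> \<delta> \<phi> where F: "degree \<alpha> \<le> m div 2" "degree \<beta> \<le> (m - 1) div 2"
      "degree \<gamma> \<le> m div 2" "degree \<delta> \<le> (m - 1) div 2" "degree \<phi> \<le> m - 1"
      "\<And>h. h > 0 \<Longrightarrow> F h = UV_combination \<alpha> \<beta> \<gamma> \<delta> \<phi> h"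
    using assms(1) by (rule representableE) blast
  have "degree (pCons 0 p) \<le> k + 1" if "degree p \<le> k" for p :: "real poly" and k
    using degree_pCons_le[of 0 p] that by linarith
  moreover have "degree ([:0, 1, 1:] * \<phi>) \<le> m + 1"
    using degree_mult_le[of "[:0, 1, 1:]" \<phi>] F(5) assms(2) by simp
  moreover have "h * UV_combination \<alpha> \<beta> \<gamma> \<delta> \<phi> h
      = UV_combination (pCons 0 \<alpha>) (pCons 0 \<beta>) (pCons 0 \<gamma>) (pCons 0 \<delta>) ([:0, 1, 1:] * \<phi>) h"
    if "h > 0" for h
  proof -
    have "h * (vv h powr (3/2) * poly \<phi> (vv h)) = vv h powr (3/2) * poly ([:0, 1, 1:] * \<phi>) (vv h)"
      by (subst (1) vv_plus_square[OF that, symmetric]) (simp add: algebra_simps power2_eq_square)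
    then show ?thesis
      by (simp add: UV_combination_def distrib_left mult.assoc)
  qed
  ultimately show ?thesis
    using F assms(2)
    by (intro representableI[where \<alpha>="pCons 0 \<alpha>" and \<beta>="pCons 0 \<beta>" and \<gamma>="pCons 0 \<gamma>"
                                 and \<delta>="pCons 0 \<delta>" and \<phi>="[:0, 1, 1:] * \<phi>"]) fastforce+
qed

text \<open>The power \<open>u\<close> itself is not of the form \<open>v powr (3/2) * \<phi> v\<close>; it is \<open>- U 0 0 / 2\<close>.\<close>
lemma representable_odd_power_uu:
  assumes "k \<le> m"
  shows "representable m (\<lambda>h. c * uu h ^ (2 * k + 1))"
proof (cases k)
  case 0
  show ?thesis
    by (rule representableI[where \<alpha>="[:- c / 2:]" and \<beta>=0 and \<gamma>=0 and \<delta>=0 and \<phi>=0])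
       (simp_all add: 0 UV_combination_def U_0_0)
next
  case (Suc l)
  have "c * uu h ^ (2 * k + 1) = vv h powr (3/2) * poly (monom c l) (vv h)" if "h > 0" for h
  proof -
    have "2 * k + 1 = 3 + 2 * l"
      using Suc by simp
    then have "c * uu h ^ (2 * k + 1) = uu h ^ 3 * (c * (uu h ^ 2) ^ l)"
      by (simp only: power_add power_mult mult.left_commute)
    then show ?thesis
      by (simp add: vv_powr_three_halves[OF that] uu_square[OF that] poly_monom)
  qed
  then show ?thesis
    using assms Suc
    by (intro representableI[where \<alpha>=0 and \<beta>=0 and \<gamma>=0 and \<delta>=0 and \<phi>="monom c l"])
       (auto intro: order_trans[OF degree_monom_le] simp: UV_combination_def)
qed

lemma representable_symmetric_increment:
  assumes "even a \<or> a div 2 + b \<le> m"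
  shows "representable m (\<lambda>h. (- (s * uu h)) ^ a * (uu h ^ 2) ^ b - (s * uu h) ^ a * (uu h ^ 2) ^ b)"
proof (cases "even a")
  case True
  then show ?thesis
    by (intro representable_cong[OF representable_zero]) simp
next
  case False
  then have "a + 2 * b = 2 * (a div 2 + b) + 1"
    by presburger
  then have "uu h ^ a * (uu h ^ 2) ^ b = uu h ^ (2 * (a div 2 + b) + 1)" for h
    by (simp only: power_add[symmetric] power_mult[symmetric])
  moreover have "(- (s * uu h)) ^ a * (uu h ^ 2) ^ b - (s * uu h) ^ a * (uu h ^ 2) ^ b
           = - 2 * s ^ a * (uu h ^ a * (uu h ^ 2) ^ b)" for h
    using False by (simp add: power_mult_distrib power_minus_odd algebra_simps)
  ultimately have increment: "(- (s * uu h)) ^ a * (uu h ^ 2) ^ b - (s * uu h) ^ a * (uu h ^ 2) ^ b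
           = - 2 * s ^ a * uu h ^ (2 * (a div 2 + b) + 1)" for h
    by simp
  have "representable m (\<lambda>h. - 2 * s ^ a * uu h ^ (2 * (a div 2 + b) + 1))"
    using assms False by (intro representable_odd_power_uu) simp
  then show ?thesis
    by (rule representable_cong) (rule increment)
qed

text \<open>The moment \<open>\<integral> y dx\<close> is assumed representable because it is one of the generators
  \<open>U 0 1\<close>, \<open>V 0 1\<close> of the theorem.\<close>
locale symmetric_arc =
  fixes th0 th1 :: "real \<Rightarrow> real" and s :: real
  assumes start_x: "h > 0 \<Longrightarrow> arc_x h (th0 h) (th1 h) 0 = s * uu h"
    and end_x: "h > 0 \<Longrightarrow> arc_x h (th0 h) (th1 h) 1 = - (s * uu h)"
    and start_y: "h > 0 \<Longrightarrow> arc_y h (th0 h) (th1 h) 0 = uu h ^ 2"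
    and end_y: "h > 0 \<Longrightarrow> arc_y h (th0 h) (th1 h) 1 = uu h ^ 2"
    and representable_int_y_dx: "representable 1 (\<lambda>h. int_xy_dx 0 1 h (th0 h) (th1 h))"
begin

abbreviation dx_moment :: "nat \<Rightarrow> nat \<Rightarrow> real \<Rightarrow> real" where
  "dx_moment i j h \<equiv> int_xy_dx i j h (th0 h) (th1 h)"

abbreviation dy_moment :: "nat \<Rightarrow> nat \<Rightarrow> real \<Rightarrow> real" where
  "dy_moment i j h \<equiv> int_xy_dy i j h (th0 h) (th1 h)"

abbreviation increment :: "nat \<Rightarrow> nat \<Rightarrow> real \<Rightarrow> real" where
  "increment p q h \<equiv> arc_x h (th0 h) (th1 h) 1 ^ p * arc_y h (th0 h) (th1 h) 1 ^ q
                    - arc_x h (th0 h) (th1 h) 0 ^ p * arc_y h (th0 h) (th1 h) 0 ^ q"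

lemma representable_increment:
  assumes "even p \<or> p div 2 + q \<le> m"
  shows "representable m (increment p q)"
  using representable_symmetric_increment[OF assms, of s]
  by (rule representable_cong) (simp add: start_x end_x start_y end_y)

lemma representable_dx_0_0: "representable 0 (dx_moment 0 0)"
  using representable_increment[of 1 0 0]
  by (rule representable_cong) (simp_all add: int_xy_dx_0_0)

lemma representable_times_h_dx_0_0: "representable 2 (\<lambda>h. h * dx_moment 0 0 h)"
proof -
  have "representable 2 (\<lambda>h. - 2 * s * uu h ^ (2 * 1 + 1) + - 2 * s * uu h ^ (2 * 2 + 1))"
    by (intro representable_add representable_odd_power_uu) simp_all
  then show ?thesis
  proof (rule representable_cong)
    fix h :: real
    assume h: "h > 0"
    have h_uu: "h = uu h ^ 2 + (uu h ^ 2) ^ 2"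
      using vv_plus_square[OF h] by (simp add: uu_square[OF h])
    have "dx_moment 0 0 h = - 2 * s * uu h"
      by (simp add: int_xy_dx_0_0 start_x end_x h)
    then show "h * dx_moment 0 0 h = - 2 * s * uu h ^ (2 * 1 + 1) + - 2 * s * uu h ^ (2 * 2 + 1)"
      by (subst (1) h_uu) (simp add: algebra_simps eval_nat_numeral)
  qed
qed

lemma representable_times_h_dx:
  assumes "representable (i + j) (dx_moment i j)"
  shows "representable (i + j + 2) (\<lambda>h. h * dx_moment i j h)"
proof (cases "i + j = 0")
  case True
  then show ?thesis
    using representable_times_h_dx_0_0 by (simp add: numeral_2_eq_2)
next
  case False
  then have "1 \<le> i + j"
    by linarith
  from representable_times_h[OF assms this] show ?thesis
    by simp
qed

lemma representable_dx_0: "representable j (dx_moment 0 j)"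
proof (induction j rule: nat_induct2)
  case 0
  show ?case by (rule representable_dx_0_0)
next
  case 1
  show ?case by (rule representable_int_y_dx)
next
  case (step j)
  have "representable (j + 2) (\<lambda>h. 1 / real (j + 3) *
          (real (j + 2) * (h * dx_moment 0 j h) + increment 1 (j + 2) h))"
    using step representable_times_h_dx[of 0 j] representable_increment[of 1 "j + 2" "j + 2"]
    by (intro representable_scale representable_add) simp_all
  then show ?case
  proof (rule representable_cong)
    fix h :: real
    assume "h > 0"
    then have "real (j + 3) * dx_moment 0 (j + 2) h
             = real (j + 2) * (h * dx_moment 0 j h) + increment 1 (j + 2) h"
      using int_xy_dx_0_recurrence[of h j "th0 h" "th1 h"] by (simp add: algebra_simps)
    then show "dx_moment 0 (j + 2) h
             = 1 / real (j + 3) * (real (j + 2) * (h * dx_moment 0 j h) + increment 1 (j + 2) h)"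
      by (simp add: field_simps)
  qed
qed

lemma representable_dx: "representable (i + j) (dx_moment i j)"
proof (induction i arbitrary: j rule: nat_induct2)
  case 0
  show ?case by (simp add: representable_dx_0)
next
  case 1
  have "dx_moment 1 j h = 0" if "h > 0" for h
    using int_xy_dx_1[of j h "th0 h" "th1 h"] by (simp add: start_y end_y that)
  then show ?case
    by (intro representable_cong[OF representable_zero])
next
  case (step i)
  have "representable (i + 2 + j) (\<lambda>h. h * dx_moment i j h + (- 1) * dx_moment i (j + 2) h)"
    using representable_times_h_dx[OF step[of j]] step[of "j + 2"]
    by (intro representable_add representable_scale) (simp_all add: ac_simps)
  then show ?case
  proof (rule representable_cong)
    fix h :: real
    assume "h > 0"
    then show "dx_moment (i + 2) j h = h * dx_moment i j h + (- 1) * dx_moment i (j + 2) h"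
      using int_xy_dx_circle_reduce[of h i j "th0 h" "th1 h"] by simp
  qed
qed

lemma representable_dy: "representable (i + j) (dy_moment i j)"
proof (cases j)
  case (Suc l)
  have "representable (i + j) (\<lambda>h. - 1 * dx_moment (i + 1) l h)"
    using representable_scale[OF representable_dx[of "i + 1" l], of "- 1"] Suc by simp
  then show ?thesis
    by (rule representable_cong) (simp add: Suc int_xy_dy_Suc)
next
  case 0
  have dx: "representable i (\<lambda>h. real i * dx_moment (i - 1) 1 h)"
  proof (cases i)
    case 0
    then show ?thesis by (simp add: representable_zero)
  next
    case (Suc l)
    then show ?thesis using representable_scale[OF representable_dx[of l 1]] by simp
  qed
  have "representable i (increment i 1)"
    by (rule representable_increment) presburger
  from representable_add[OF this representable_scale[OF dx, of "- 1"]]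
  have "representable (i + j) (\<lambda>h. increment i 1 h + - 1 * (real i * dx_moment (i - 1) 1 h))"
    by (simp add: 0)
  then show ?thesis
  proof (rule representable_cong)
    fix h :: real
    show "dy_moment i j h = increment i 1 h + - 1 * (real i * dx_moment (i - 1) 1 h)"
      using int_xy_dy_0[of i h "th0 h" "th1 h"] unfolding 0 by simp
  qed
qed

lemma representable_moment_combination:
  assumes "i + j \<le> n"
  shows "representable n (\<lambda>h. c * dx_moment i j h + d * dy_moment i j h)"
  using representable_add[OF representable_scale[OF representable_dx]
                            representable_scale[OF representable_dy]]
  by (rule representable_mono) (rule assms)

end

interpretation arcAD: symmetric_arc "\<lambda>h. arctan (uu h)" "\<lambda>h. - pi - arctan (uu h)" 1
  by unfold_locales
     (use representable_U_0_1 in \<open>simp_all add: arcAD_endpoints flip: U_eq_int_xy_dx\<close>)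

interpretation arcDA: symmetric_arc "\<lambda>h. pi - arctan (uu h)" "\<lambda>h. arctan (uu h)" "- 1"
  by unfold_locales
     (use representable_V_0_1 in \<open>simp_all add: arcDA_endpoints flip: V_eq_int_xy_dx\<close>)

theorem lemma4p1:
  fixes n :: nat and f1 g1 f2 g2 :: "real \<Rightarrow> real \<Rightarrow> real"
  assumes "n \<ge> 1"
    and "poly2_deg_le n f1" and "poly2_deg_le n g1"
    and "poly2_deg_le n f2" and "poly2_deg_le n g2"
  shows "\<exists>\<alpha> \<beta> \<gamma> \<delta> \<phi> :: real poly.
     degree \<alpha> \<le> n div 2 \<and> degree \<gamma> \<le> n div 2 \<and>
     degree \<beta> \<le> (n - 1) div 2 \<and> degree \<delta> \<le> (n - 1) div 2 \<and>
     degree \<phi> \<le> n - 1 \<and>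
     (\<forall>h::real. h > 0 \<longrightarrow>
        melnikov f1 g1 f2 g2 h =
          poly \<alpha> h * U 0 0 h + poly \<beta> h * U 0 1 h
        + poly \<gamma> h * V 0 0 h + poly \<delta> h * V 0 1 h
        + vv h powr (3/2) * poly \<phi> (vv h))"
proof -
  obtain cf1 where f1: "\<And>x y. f1 x y = (\<Sum>i\<le>n. \<Sum>j\<le>n - i. cf1 i j * x ^ i * y ^ j)"
    using assms(2) unfolding poly2_deg_le_def by blast
  obtain cg1 where g1: "\<And>x y. g1 x y = (\<Sum>i\<le>n. \<Sum>j\<le>n - i. cg1 i j * x ^ i * y ^ j)"
    using assms(3) unfolding poly2_deg_le_def by blast
  obtain cf2 where f2: "\<And>x y. f2 x y = (\<Sum>i\<le>n. \<Sum>j\<le>n - i. cf2 i j * x ^ i * y ^ j)"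
    using assms(4) unfolding poly2_deg_le_def by blast
  obtain cg2 where g2: "\<And>x y. g2 x y = (\<Sum>i\<le>n. \<Sum>j\<le>n - i. cg2 i j * x ^ i * y ^ j)"
    using assms(5) unfolding poly2_deg_le_def by blast
  have melnikov_moments: "melnikov f1 g1 f2 g2 h =
      (\<Sum>i\<le>n. \<Sum>j\<le>n - i. cg1 i j * arcAD.dx_moment i j h + - cf1 i j * arcAD.dy_moment i j h)
    + (\<Sum>i\<le>n. \<Sum>j\<le>n - i. cg2 i j * arcDA.dx_moment i j h + - cf2 i j * arcDA.dy_moment i j h)" for h
    unfolding melnikov_def arcAD_def arcDA_def
    by (intro arg_cong2[where f="(+)"] arc_int_polynomial) (simp_all add: f1 g1 f2 g2 sum_negf)
  have "representable n (melnikov f1 g1 f2 g2)"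
    unfolding melnikov_moments
    by (intro representable_add representable_sum finite_atMost
          arcAD.representable_moment_combination arcDA.representable_moment_combination) auto
  then show ?thesis
    unfolding representable_def UV_combination_def by blast
qed

end
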